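(* Let $\Gamma=(V,E)$ be a graph, $M_v$ ($v\in V$) monoids, and $M=\Gamma_{v\in V}M_v$. Let $a\in M$, $v\in V$ and $c\in M_v$. Suppose $a$ has final $v$-component $d$ and final $v$-complement $a'$. Then $ac$ has final $v$-component $dc$ and final $v$-complement $a'$.
   Context: A graph $\Gamma=(V,E)$ has vertex set $V$ and irreflexive symmetric edge relation $E$. The graph product $M=\Gamma_{v\in V}M_v$ of pairwise disjoint monoids $M_v$ is the quotient of their free product by the congruence generated by $(mn,nm)$ for $m\in M_u$, $n\in M_v$, $(u,v)\in E$; each $M_v$ is identified with its image in $M$. Let $X$ be the disjoint union of the sets $M_v\setminus\{1\}$, and for $m\in M_v\setminus\{1\}$ set $C(m)=v$. A word $x_1\circ\cdots\circ x_n\in X^*$ is an expression for $x_1\cdots x_n\in M$; it is reduced if whenever $i<j$ and $C(x_i)=C(x_j)$ there is $k$ with $i<k<j$ and $(C(x_i),C(x_k))\notin E$. For $a,a'\in M$ and $c\in M_v\setminus\{1\}$: $a$ has final $v$-component $c$ and final $v$-complement $a'$ if $a$ has a reduced expression $a_1\circ\cdots\circ a_m\circ c$ with $a_1\cdots a_m=a'$; and $a$ has final $v$-component $1$ and final $v$-complement $a$ if $a$ has a reduced expression $a_1\circ\cdots\circ a_m$ such that either (i) $C(a_j)\ne v$ for all $j$, or (ii) there is $k$ with $(C(a_k),v)\notin E$ and $C(a_j)\ne v$ for all $j\ge k$. Each element has exactly one final $v$-component and one final $v$-complement. *)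

theory Defs
  imports "HOL-Algebra.Group"
begin

(* Letters of X: pairs (v, m) with m a non-identity element of M_v; the tag v makes
   the union disjoint and C(v,m) = v. *)
definition gp_letter :: "('v \<Rightarrow> ('a,'b) monoid_scheme) \<Rightarrow> 'v \<times> 'a \<Rightarrow> bool" where
  "gp_letter Mv x \<longleftrightarrow> snd x \<in> carrier (Mv (fst x)) \<and> snd x \<noteq> \<one>\<^bsub>Mv (fst x)\<^esub>"

definition gp_word :: "('v \<Rightarrow> ('a,'b) monoid_scheme) \<Rightarrow> ('v \<times> 'a) list \<Rightarrow> bool" where
  "gp_word Mv w \<longleftrightarrow> (\<forall>x\<in>set w. gp_letter Mv x)"

(* One-step rewriting generating the congruence: the free product relations
   (multiplying adjacent letters from the same M_v) and the graph commutations. *)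
inductive gp_step :: "('v \<Rightarrow> 'v \<Rightarrow> bool) \<Rightarrow> ('v \<Rightarrow> ('a,'b) monoid_scheme)
    \<Rightarrow> ('v \<times> 'a) list \<Rightarrow> ('v \<times> 'a) list \<Rightarrow> bool" for E Mv where
  merge: "\<lbrakk>gp_letter Mv (v,m); gp_letter Mv (v,n); m \<otimes>\<^bsub>Mv v\<^esub> n \<noteq> \<one>\<^bsub>Mv v\<^esub>\<rbrakk>
     \<Longrightarrow> gp_step E Mv (u @ [(v,m),(v,n)] @ w) (u @ [(v, m \<otimes>\<^bsub>Mv v\<^esub> n)] @ w)"
| cancel: "\<lbrakk>gp_letter Mv (v,m); gp_letter Mv (v,n); m \<otimes>\<^bsub>Mv v\<^esub> n = \<one>\<^bsub>Mv v\<^esub>\<rbrakk>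
     \<Longrightarrow> gp_step E Mv (u @ [(v,m),(v,n)] @ w) (u @ w)"
| comm: "\<lbrakk>gp_letter Mv (v,m); gp_letter Mv (v',n); E v v'\<rbrakk>
     \<Longrightarrow> gp_step E Mv (u @ [(v,m),(v',n)] @ w) (u @ [(v',n),(v,m)] @ w)"

(* Equality in the graph product M: two words over X represent the same element.
   Multiplication in M is concatenation of representatives. *)
definition gp_eq :: "('v \<Rightarrow> 'v \<Rightarrow> bool) \<Rightarrow> ('v \<Rightarrow> ('a,'b) monoid_scheme)
    \<Rightarrow> ('v \<times> 'a) list \<Rightarrow> ('v \<times> 'a) list \<Rightarrow> bool" where
  "gp_eq E Mv = equivclp (gp_step E Mv)"

definition gp_emb :: "('v \<Rightarrow> ('a,'b) monoid_scheme) \<Rightarrow> 'v \<Rightarrow> 'a \<Rightarrow> ('v \<times> 'a) list" where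
  "gp_emb Mv v c = (if c = \<one>\<^bsub>Mv v\<^esub> then [] else [(v,c)])"

definition gp_reduced :: "('v \<Rightarrow> 'v \<Rightarrow> bool) \<Rightarrow> ('v \<times> 'a) list \<Rightarrow> bool" where
  "gp_reduced E w \<longleftrightarrow> (\<forall>i j. i < j \<and> j < length w \<and> fst (w!i) = fst (w!j) \<longrightarrow>
      (\<exists>k. i < k \<and> k < j \<and> \<not> E (fst (w!i)) (fst (w!k))))"

definition final_comp :: "('v \<Rightarrow> 'v \<Rightarrow> bool) \<Rightarrow> ('v \<Rightarrow> ('a,'b) monoid_scheme) \<Rightarrow> 'v
    \<Rightarrow> ('v \<times> 'a) list \<Rightarrow> 'a \<Rightarrow> ('v \<times> 'a) list \<Rightarrow> bool" where
  "final_comp E Mv v a d a' \<longleftrightarrow> d \<in> carrier (Mv v) \<and>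
     (if d \<noteq> \<one>\<^bsub>Mv v\<^esub> then
        (\<exists>ws. gp_word Mv (ws @ [(v,d)]) \<and> gp_reduced E (ws @ [(v,d)])
              \<and> gp_eq E Mv (ws @ [(v,d)]) a \<and> gp_eq E Mv ws a')
      else
        gp_eq E Mv a' a \<and>
        (\<exists>ws. gp_word Mv ws \<and> gp_reduced E ws \<and> gp_eq E Mv ws a \<and>
           ((\<forall>j<length ws. fst (ws!j) \<noteq> v) \<or>
            (\<exists>k<length ws. \<not> E (fst (ws!k)) v \<and>
               (\<forall>j. k \<le> j \<and> j < length ws \<longrightarrow> fst (ws!j) \<noteq> v)))))"

end

theory Submission
  imports Defs
begin

text \<open>A reduced word ends in a v-letter exactly when its prefix is reduced and satisfies
condition (i) or (ii) for v (the predicate no_final_letter below). So appending c to a reduced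
word for a either makes c the new final v-letter (if d = 1), or merges it with the final letter
(v,d) into (v,dc), which vanishes if dc = 1; in every case the prefix, and hence the final
v-complement a', stays the same.\<close>

lemma gp_letter_Pair [simp]:
  "gp_letter Mv (v,m) \<longleftrightarrow> m \<in> carrier (Mv v) \<and> m \<noteq> \<one>\<^bsub>Mv v\<^esub>"
  by (simp add: gp_letter_def)

lemma gp_step_append_right: "gp_step E Mv x y \<Longrightarrow> gp_step E Mv (x @ z) (y @ z)"
proof (induction rule: gp_step.induct)
  case (merge v m n u w)
  then show ?case using gp_step.merge[of Mv v m n E u "w @ z"] by simp
next
  case (cancel v m n u w)
  then show ?case using gp_step.cancel[of Mv v m n E u "w @ z"] by simp
next
  case (comm v m v' n u w)
  then show ?case using gp_step.comm[of Mv v m v' n E u "w @ z"] by simp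
qed

lemma gp_step_imp_gp_eq: "gp_step E Mv x y \<Longrightarrow> gp_eq E Mv x y"
  unfolding gp_eq_def by (rule r_into_equivclp)

lemma gp_eq_sym: "gp_eq E Mv x y \<Longrightarrow> gp_eq E Mv y x"
  unfolding gp_eq_def by (rule equivclp_sym)

lemma gp_eq_trans [trans]: "gp_eq E Mv x y \<Longrightarrow> gp_eq E Mv y z \<Longrightarrow> gp_eq E Mv x z"
  unfolding gp_eq_def by (rule equivclp_trans)

lemma gp_eq_append_right: "gp_eq E Mv x y \<Longrightarrow> gp_eq E Mv (x @ z) (y @ z)"
  unfolding gp_eq_def
proof (induction rule: equivclp_induct)
  case base
  then show ?case by simp
next
  case (step y w)
  then show ?case using gp_step_append_right by (meson equivclp_into_equivclp)
qed

definition no_final_letter :: "('v \<Rightarrow> 'v \<Rightarrow> bool) \<Rightarrow> 'v \<Rightarrow> ('v \<times> 'a) list \<Rightarrow> bool" where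
  "no_final_letter E v ws \<longleftrightarrow>
     (\<forall>j<length ws. fst (ws!j) \<noteq> v) \<or>
     (\<exists>k<length ws. \<not> E (fst (ws!k)) v \<and> (\<forall>j. k \<le> j \<and> j < length ws \<longrightarrow> fst (ws!j) \<noteq> v))"

lemma no_final_letter_if_reduced_snoc:
  assumes sym: "\<And>u w. E u w \<Longrightarrow> E w u" and red: "gp_reduced E (ws @ [(v,d)])"
  shows "no_final_letter E v ws"
proof (cases "\<exists>j<length ws. fst (ws!j) = v")
  case False
  then show ?thesis unfolding no_final_letter_def by auto
next
  case True
  define i where "i = (GREATEST j. j < length ws \<and> fst (ws!j) = v)"
  have i: "i < length ws" "fst (ws!i) = v"
    using GreatestI_nat[of "\<lambda>j. j < length ws \<and> fst (ws!j) = v" _ "length ws"] True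
    unfolding i_def by (auto simp: less_imp_le_nat)
  have i_last: "j \<le> i" if "j < length ws" "fst (ws!j) = v" for j
    using that unfolding i_def by (metis (mono_tags, lifting) Greatest_le_nat less_imp_le_nat)
  from red i obtain k where k: "i < k" "k < length ws" "\<not> E v (fst (ws!k))"
    unfolding gp_reduced_def
    by (metis (no_types, lifting) fst_conv length_append_singleton less_Suc_eq nth_append nth_append_length)
  have "\<not> E (fst (ws!k)) v" using k(3) sym by blast
  moreover have "fst (ws!j) \<noteq> v" if "k \<le> j" "j < length ws" for j
    using i_last[OF that(2)] that(1) k(1) by linarith
  ultimately show ?thesis using k(2) unfolding no_final_letter_def by blast
qed

lemma gp_reduced_snoc_if_no_final_letter:
  assumes sym: "\<And>u w. E u w \<Longrightarrow> E w u"
    and red: "gp_reduced E ws" and nfl: "no_final_letter E v ws"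
  shows "gp_reduced E (ws @ [(v,c)])"
  unfolding gp_reduced_def
proof (intro allI impI)
  fix i j
  assume ij: "i < j \<and> j < length (ws @ [(v,c)]) \<and> fst ((ws @ [(v,c)])!i) = fst ((ws @ [(v,c)])!j)"
  show "\<exists>k>i. k < j \<and> \<not> E (fst ((ws @ [(v,c)])!i)) (fst ((ws @ [(v,c)])!k))"
  proof (cases "j < length ws")
    case True
    with ij have "i < length ws" by simp
    with True ij have "i < j \<and> j < length ws \<and> fst (ws!i) = fst (ws!j)" by (simp add: nth_append)
    with red obtain k where k: "i < k" "k < j" "\<not> E (fst (ws!i)) (fst (ws!k))"
      unfolding gp_reduced_def by blast
    with True \<open>i < length ws\<close> show ?thesis by (intro exI[of _ k]) (simp add: nth_append)
  next
    case False
    then have j: "j = length ws" using ij by auto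
    then have iv: "i < length ws" "fst (ws!i) = v" using ij by (auto simp: nth_append)
    then obtain k where k: "k < length ws" "\<not> E (fst (ws!k)) v"
        "\<forall>j. k \<le> j \<and> j < length ws \<longrightarrow> fst (ws!j) \<noteq> v"
      using nfl unfolding no_final_letter_def by blast
    have "i < k" by (rule ccontr) (use k(3) iv in auto)
    moreover have "\<not> E v (fst (ws!k))" using k(2) sym by blast
    ultimately show ?thesis using k(1) iv j by (intro exI[of _ k]) (simp add: nth_append)
  qed
qed

lemma gp_reduced_snoc_prefix: "gp_reduced E (ws @ [x]) \<Longrightarrow> gp_reduced E ws"
  unfolding gp_reduced_def
proof (intro allI impI)
  fix i j
  assume red: "\<forall>i j. i < j \<and> j < length (ws @ [x]) \<and> fst ((ws @ [x])!i) = fst ((ws @ [x])!j) \<longrightarrow>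
      (\<exists>k>i. k < j \<and> \<not> E (fst ((ws @ [x])!i)) (fst ((ws @ [x])!k)))"
    and ij: "i < j \<and> j < length ws \<and> fst (ws!i) = fst (ws!j)"
  then have "i < j \<and> j < length (ws @ [x]) \<and> fst ((ws @ [x])!i) = fst ((ws @ [x])!j)"
    by (simp add: nth_append)
  with red obtain k where "i < k" "k < j" "\<not> E (fst ((ws @ [x])!i)) (fst ((ws @ [x])!k))"
    by blast
  then show "\<exists>k>i. k < j \<and> \<not> E (fst (ws!i)) (fst (ws!k))" using ij by (auto simp: nth_append)
qed

lemma gp_reduced_snoc_iff:
  assumes "\<And>u w. E u w \<Longrightarrow> E w u"
  shows "gp_reduced E (ws @ [(v,c)]) \<longleftrightarrow> gp_reduced E ws \<and> no_final_letter E v ws"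
  using assms gp_reduced_snoc_prefix no_final_letter_if_reduced_snoc
    gp_reduced_snoc_if_no_final_letter by metis

lemma final_comp_oneI:
  assumes "monoid (Mv v)" "gp_eq E Mv a' a"
    and "gp_word Mv ws" "gp_reduced E ws" "gp_eq E Mv ws a" "no_final_letter E v ws"
  shows "final_comp E Mv v a \<one>\<^bsub>Mv v\<^esub> a'"
  using assms monoid.one_closed[OF assms(1)] unfolding final_comp_def no_final_letter_def by auto

lemma final_comp_oneE:
  assumes "final_comp E Mv v a \<one>\<^bsub>Mv v\<^esub> a'"
  obtains ws where "gp_word Mv ws" "gp_reduced E ws" "gp_eq E Mv ws a" "no_final_letter E v ws"
    and "gp_eq E Mv a' a"
  using assms unfolding final_comp_def no_final_letter_def by auto

lemma final_comp_nononeI: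
  assumes "d \<in> carrier (Mv v)" "d \<noteq> \<one>\<^bsub>Mv v\<^esub>"
    and "gp_word Mv (ws @ [(v,d)])" "gp_reduced E (ws @ [(v,d)])"
    and "gp_eq E Mv (ws @ [(v,d)]) a" "gp_eq E Mv ws a'"
  shows "final_comp E Mv v a d a'"
  using assms unfolding final_comp_def by auto

lemma final_comp_nononeE:
  assumes "final_comp E Mv v a d a'" "d \<noteq> \<one>\<^bsub>Mv v\<^esub>"
  obtains ws where "gp_word Mv (ws @ [(v,d)])" "gp_reduced E (ws @ [(v,d)])"
    and "gp_eq E Mv (ws @ [(v,d)]) a" "gp_eq E Mv ws a'"
  using assms unfolding final_comp_def by auto

lemma final_comp_snoc_new_letter:
  assumes sym: "\<And>u w. E u w \<Longrightarrow> E w u"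
    and c: "gp_letter Mv (v,c)" and fin: "final_comp E Mv v a \<one>\<^bsub>Mv v\<^esub> a'"
  shows "final_comp E Mv v (a @ [(v,c)]) c a'"
proof -
  from fin obtain ws where ws: "gp_word Mv ws" "gp_reduced E ws" "gp_eq E Mv ws a"
      "no_final_letter E v ws" and a'a: "gp_eq E Mv a' a"
    by (rule final_comp_oneE)
  have "gp_word Mv (ws @ [(v,c)])" using ws(1) c by (simp add: gp_word_def)
  moreover have "gp_reduced E (ws @ [(v,c)])"
    using gp_reduced_snoc_iff[of E ws v c, OF sym] ws(2,4) by simp
  moreover have "gp_eq E Mv (ws @ [(v,c)]) (a @ [(v,c)])" using ws(3) by (rule gp_eq_append_right)
  moreover have "gp_eq E Mv ws a'" using gp_eq_trans[OF ws(3) gp_eq_sym[OF a'a]] .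
  moreover have "c \<in> carrier (Mv v)" "c \<noteq> \<one>\<^bsub>Mv v\<^esub>" using c by simp_all
  ultimately show ?thesis by (intro final_comp_nononeI)
qed

lemma final_comp_snoc_cancel:
  assumes sym: "\<And>u w. E u w \<Longrightarrow> E w u" and mon: "monoid (Mv v)"
    and d: "gp_letter Mv (v,d)" and c: "gp_letter Mv (v,c)"
    and dc: "d \<otimes>\<^bsub>Mv v\<^esub> c = \<one>\<^bsub>Mv v\<^esub>" and fin: "final_comp E Mv v a d a'"
  shows "final_comp E Mv v (a @ [(v,c)]) \<one>\<^bsub>Mv v\<^esub> a'"
proof -
  have "d \<noteq> \<one>\<^bsub>Mv v\<^esub>" using d by simp
  with fin obtain ws where ws: "gp_word Mv (ws @ [(v,d)])" "gp_reduced E (ws @ [(v,d)])"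
      "gp_eq E Mv (ws @ [(v,d)]) a" "gp_eq E Mv ws a'"
    by (rule final_comp_nononeE)
  have "gp_eq E Mv ws (ws @ [(v,d),(v,c)])"
    using gp_eq_sym[OF gp_step_imp_gp_eq[OF gp_step.cancel[OF d c dc, of E ws "[]"]]] by simp
  also have "gp_eq E Mv \<dots> (a @ [(v,c)])"
    using gp_eq_append_right[OF ws(3), of "[(v,c)]"] by simp
  finally have ws_ac: "gp_eq E Mv ws (a @ [(v,c)])" .
  moreover have "gp_eq E Mv a' (a @ [(v,c)])" using gp_eq_trans[OF gp_eq_sym[OF ws(4)] ws_ac] .
  moreover have "gp_word Mv ws" using ws(1) by (simp add: gp_word_def)
  moreover have "gp_reduced E ws" "no_final_letter E v ws"
    using gp_reduced_snoc_iff[of E ws v d, OF sym] ws(2) by simp_all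
  ultimately show ?thesis by (intro final_comp_oneI[of Mv v, OF mon])
qed

lemma final_comp_snoc_merge:
  assumes sym: "\<And>u w. E u w \<Longrightarrow> E w u" and mon: "monoid (Mv v)"
    and d: "gp_letter Mv (v,d)" and c: "gp_letter Mv (v,c)"
    and dc: "d \<otimes>\<^bsub>Mv v\<^esub> c \<noteq> \<one>\<^bsub>Mv v\<^esub>" and fin: "final_comp E Mv v a d a'"
  shows "final_comp E Mv v (a @ [(v,c)]) (d \<otimes>\<^bsub>Mv v\<^esub> c) a'"
proof -
  have dc_carrier: "d \<otimes>\<^bsub>Mv v\<^esub> c \<in> carrier (Mv v)"
    using c d monoid.m_closed[OF mon] by simp
  have "d \<noteq> \<one>\<^bsub>Mv v\<^esub>" using d by simp
  with fin obtain ws where ws: "gp_word Mv (ws @ [(v,d)])" "gp_reduced E (ws @ [(v,d)])"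
      "gp_eq E Mv (ws @ [(v,d)]) a" "gp_eq E Mv ws a'"
    by (rule final_comp_nononeE)
  have "gp_eq E Mv (ws @ [(v, d \<otimes>\<^bsub>Mv v\<^esub> c)]) (ws @ [(v,d),(v,c)])"
    using gp_eq_sym[OF gp_step_imp_gp_eq[OF gp_step.merge[OF d c dc, of E ws "[]"]]] by simp
  also have "gp_eq E Mv \<dots> (a @ [(v,c)])"
    using gp_eq_append_right[OF ws(3), of "[(v,c)]"] by simp
  finally have "gp_eq E Mv (ws @ [(v, d \<otimes>\<^bsub>Mv v\<^esub> c)]) (a @ [(v,c)])" .
  moreover have "gp_word Mv (ws @ [(v, d \<otimes>\<^bsub>Mv v\<^esub> c)])"
    using ws(1) dc_carrier dc by (simp add: gp_word_def)
  moreover have "gp_reduced E (ws @ [(v, d \<otimes>\<^bsub>Mv v\<^esub> c)])"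
    using gp_reduced_snoc_iff[of E ws v d, OF sym]
      gp_reduced_snoc_iff[of E ws v "d \<otimes>\<^bsub>Mv v\<^esub> c", OF sym] ws(2)
    by simp
  ultimately show ?thesis using ws(4) dc_carrier dc by (intro final_comp_nononeI)
qed

theorem lemma1p4:
  fixes E :: "'v \<Rightarrow> 'v \<Rightarrow> bool"
    and Mv :: "'v \<Rightarrow> ('a,'b) monoid_scheme"
  assumes irrefl: "\<And>u. \<not> E u u"
    and sym: "\<And>u w. E u w \<Longrightarrow> E w u"
    and mon: "\<And>u. monoid (Mv u)"
    and a: "gp_word Mv a" and a': "gp_word Mv a'"
    and c: "c \<in> carrier (Mv v)"
    and fin: "final_comp E Mv v a d a'"
  shows "final_comp E Mv v (a @ gp_emb Mv v c) (d \<otimes>\<^bsub>Mv v\<^esub> c) a'"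
proof -
  interpret M: monoid "Mv v" by (rule mon)
  have d: "d \<in> carrier (Mv v)" using fin unfolding final_comp_def by simp
  show ?thesis
  proof (cases "c = \<one>\<^bsub>Mv v\<^esub>")
    case True
    then show ?thesis using fin d by (simp add: gp_emb_def)
  next
    case False
    then have emb: "gp_emb Mv v c = [(v,c)]" and c_letter: "gp_letter Mv (v,c)"
      using c by (simp_all add: gp_emb_def)
    consider "d = \<one>\<^bsub>Mv v\<^esub>"
      | "d \<noteq> \<one>\<^bsub>Mv v\<^esub>" "d \<otimes>\<^bsub>Mv v\<^esub> c = \<one>\<^bsub>Mv v\<^esub>"
      | "d \<noteq> \<one>\<^bsub>Mv v\<^esub>" "d \<otimes>\<^bsub>Mv v\<^esub> c \<noteq> \<one>\<^bsub>Mv v\<^esub>"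
      by blast
    then show ?thesis
    proof cases
      case 1
      have "final_comp E Mv v (a @ [(v,c)]) c a'"
        using final_comp_snoc_new_letter[OF sym c_letter] fin 1 by simp
      then show ?thesis using 1 c emb by simp
    next
      case 2
      then have "gp_letter Mv (v,d)" using d by simp
      then show ?thesis using final_comp_snoc_cancel[OF sym mon _ c_letter 2(2) fin] emb 2(2) by simp
    next
      case 3
      then have "gp_letter Mv (v,d)" using d by simp
      then show ?thesis using final_comp_snoc_merge[OF sym mon _ c_letter 3(2) fin] emb by simp
    qed
  qed
qed

end
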